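(* Let $F$ be a 3-SAT formula over variables $x_1,\dots,x_p$ with clauses $C_1,\dots,C_c$, and $A$ a partial assignment on $x_1,\dots,x_p$. Let $$X = \begin{bmatrix} 0 & 1 & 1\\ E(C_1) & 0 & 1\\ \vdots&\vdots&\vdots\\ E(C_c) & 0 & 1\\ E(A) & 0 & 1\end{bmatrix}\in\mathbb{R}^{(c+2)\times(2p+2)}$$ (the first row has the zero vector in its first $2p$ entries). Then there exist: (i) a saturated attention head with parameters $\Gamma_s^{A\models F}$ and output dimension $1$ such that $\operatorname{SaturatedAttn}(X;\Gamma_s^{A\models F})_{c+2} = \mathbf{1}_{A\models F}$; (ii) a saturated attention head with parameters $\Gamma_s^{F\models\lnot A}$ and output dimension $1$ such that $\operatorname{SaturatedAttn}(X;\Gamma_s^{F\models\lnot A})_{c+2} = \mathbf{1}_{F\models\lnot A}$; (iii) a saturated attention head with parameters $\Gamma_s^{D}$ and output dimension $2p$, and an MLP layer with ReGLU activation and parameters $\Gamma^D_{MLP}$, such that $\operatorname{MLP}\big([\operatorname{SaturatedAttn}(X;\Gamma_s^D);X];\Gamma^D_{MLP}\big)_{c+2} = E(D)$ whenever $F\not\models\lnot A$, where $D=\{\ell\in L\mid F\land A\models_1\ell\}$. The parameters depend only on $p$ and $c$, not on $F$ or $A$.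
   Context: Literals $L = \{x_1,\lnot x_1,\dots,x_p,\lnot x_p\}$; clauses and partial assignments are subsets of $L$ not containing both $x_v$ and $\lnot x_v$; a clause is the disjunction of its literals and a partial assignment sets $x_v$ true if $x_v\in A$, false if $\lnot x_v\in A$. $E(B)\in\{0,1\}^{2p}$ has $E(B)_v = \mathbf{1}_{x_v\in B}$, $E(B)_{v+p} = \mathbf{1}_{\lnot x_v\in B}$. $A\models F$: every clause contains a literal of $A$. $F\models\lnot A$: some clause has all its literals' negations in $A$. $F\land A\models_1\ell$: some clause not satisfied by $A$ becomes exactly $\{\ell\}$ after deleting literals whose negations are in $A$. Saturated masked attention with weights $\Gamma_s=(W_Q,W_K,W_V)$: let $\mathbf{A} = XW_Q(XW_K)^\top$, $\mathcal{M}_i = \{j\le i \mid \mathbf{A}_{ij} = \max_{k\le i}\mathbf{A}_{ik}\}$, and $\operatorname{SaturatedAttn}(X;\Gamma_s)_i = \frac{1}{|\mathcal{M}_i|}\sum_{j\in\mathcal{M}_i} X_jW_V$. An MLP layer with ReGLU activation computes $x\mapsto W_2[(W_1x+b_1)\otimes\operatorname{ReLU}(Vx+b_2)]+b$ at each position; $[\cdot;\cdot]$ denotes rowwise concatenation. *)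

theory Defs
  imports "Jordan_Normal_Form.Matrix"
begin

text \<open>Variables x_1..x_p are encoded by indices 0..p-1. A literal is a pair (v, b):
  (v, True) is x_{v+1}, (v, False) is its negation.\<close>

type_synonym lit = "nat \<times> bool"

definition lits :: "nat \<Rightarrow> lit set" where
  "lits p = {0..<p} \<times> UNIV"

definition neg_lit :: "lit \<Rightarrow> lit" where
  "neg_lit l = (fst l, \<not> snd l)"

definition wf_litset :: "nat \<Rightarrow> lit set \<Rightarrow> bool" where
  "wf_litset p B \<longleftrightarrow> B \<subseteq> lits p \<and> (\<forall>v. \<not> ((v, True) \<in> B \<and> (v, False) \<in> B))"

definition clause3 :: "nat \<Rightarrow> lit set \<Rightarrow> bool" where
  "clause3 p C \<longleftrightarrow> wf_litset p C \<and> card C = 3"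

definition sat_models :: "lit set \<Rightarrow> lit set list \<Rightarrow> bool" where
  "sat_models A F \<longleftrightarrow> (\<forall>C\<in>set F. \<exists>l\<in>C. l \<in> A)"

definition refutes :: "lit set list \<Rightarrow> lit set \<Rightarrow> bool" where
  "refutes F A \<longleftrightarrow> (\<exists>C\<in>set F. \<forall>l\<in>C. neg_lit l \<in> A)"

definition unit_implies :: "lit set list \<Rightarrow> lit set \<Rightarrow> lit \<Rightarrow> bool" where
  "unit_implies F A l \<longleftrightarrow>
     (\<exists>C\<in>set F. \<not> (\<exists>l'\<in>C. l' \<in> A) \<and> {l'\<in>C. neg_lit l' \<notin> A} = {l})"

text \<open>Encoding E(B) in {0,1}^{2p}: entry v (0-based, v<p) is 1 iff x_v in B,
  entry v+p is 1 iff not x_v in B.\<close>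
definition enc :: "nat \<Rightarrow> lit set \<Rightarrow> real vec" where
  "enc p B = vec (2 * p) (\<lambda>k. if k < p then (if (k, True) \<in> B then 1 else 0)
                                        else (if (k - p, False) \<in> B then 1 else 0))"

text \<open>The input matrix X in R^{(c+2) x (2p+2)} (rows 0-based: row 0 is [0,1,1],
  rows 1..c are [E(C_i),0,1], row c+1 is [E(A),0,1]).\<close>
definition inputX :: "nat \<Rightarrow> lit set list \<Rightarrow> lit set \<Rightarrow> real mat" where
  "inputX p F A = mat (length F + 2) (2 * p + 2) (\<lambda>(i, j).
      if i = 0 then (if j < 2 * p then 0 else 1)
      else if j = 2 * p then 0
      else if j = 2 * p + 1 then 1
      else if i \<le> length F then enc p (F ! (i - 1)) $ j
      else enc p A $ j)"

definition sat_attn :: "real mat \<Rightarrow> real mat \<Rightarrow> real mat \<Rightarrow> real mat \<Rightarrow> real mat" where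
  "sat_attn X WQ WK WV =
    (let S = (X * WQ) * transpose_mat (X * WK);
         Vm = X * WV;
         M = (\<lambda>i. {j. j \<le> i \<and> S $$ (i, j) = Max {S $$ (i, k) | k. k \<le> i}})
     in mat (dim_row X) (dim_col WV)
          (\<lambda>(i, l). (\<Sum>j\<in>M i. Vm $$ (j, l)) / real (card (M i))))"

definition hconcat :: "real mat \<Rightarrow> real mat \<Rightarrow> real mat" where
  "hconcat A B = mat (dim_row A) (dim_col A + dim_col B)
     (\<lambda>(i, j). if j < dim_col A then A $$ (i, j) else B $$ (i, j - dim_col A))"

definition reglu_mlp :: "real mat \<Rightarrow> real vec \<Rightarrow> real mat \<Rightarrow> real vec \<Rightarrow> real mat \<Rightarrow> real vec
    \<Rightarrow> real vec \<Rightarrow> real vec" where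
  "reglu_mlp W1 b1 Vg b2 W2 b x =
     W2 *\<^sub>v vec (dim_row W1) (\<lambda>k. (W1 *\<^sub>v x + b1) $ k * max 0 ((Vg *\<^sub>v x + b2) $ k)) + b"

end

theory Submission
  imports Defs
begin

text \<open>
  Every head uses the identity as key matrix and a query matrix \<open>query_mat p \<alpha> \<delta> \<beta> \<gamma>\<close>,
  under which the last row (encoding \<open>A\<close>) scores a row encoding the literal set \<open>B\<close> by
  \<open>\<alpha> |B \<inter> A| + \<delta> |{l \<in> B. \<not>l \<in> A}| + \<beta> |B|\<close>, plus \<open>\<gamma>\<close> for the constant first row.
  The constants make the clause rows of interest (unsatisfied, falsified, unit) reach a
  common top score, push every other row below \<open>\<gamma>\<close>, and keep \<open>\<gamma>\<close> below the top. So the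
  last row attends to exactly the clause rows of interest, or to the first row alone if there
  are none, and the value matrices read off whether the first row won, whether a clause row
  won, and, for the unit head, the fraction \<open>u\<^sub>l\<close> of unit clauses containing the literal
  \<open>l\<close>. That fraction is positive iff \<open>l\<close> occurs in some unit clause, and is then at least
  \<open>1/c\<close>; so the ReGLU layer computing \<open>ReLU(z) - ReLU(z - 1)\<close> for \<open>z = c (u\<^sub>l - [\<not>l \<in> A])\<close>
  outputs exactly the indicator of unit propagation.
\<close>

section \<open>Saturated attention\<close>

definition argmax_upto :: "(nat \<Rightarrow> real) \<Rightarrow> nat \<Rightarrow> nat set" where
  "argmax_upto s i = {j. j \<le> i \<and> s j = Max {s k | k. k \<le> i}}"

lemma argmax_upto_eqI:
  assumes "T \<subseteq> {..i}" "T \<noteq> {}" "\<And>j. j \<in> T \<Longrightarrow> s j = m"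
    and "\<And>j. j \<le> i \<Longrightarrow> j \<notin> T \<Longrightarrow> s j < m"
  shows "argmax_upto s i = T"
proof -
  have "Max {s k | k. k \<le> i} = m"
  proof (rule Max_eqI)
    show "y \<le> m" if "y \<in> {s k | k. k \<le> i}" for y
      using that assms(3,4) by (cases "y \<in> s ` T") (force, fastforce)
    show "m \<in> {s k | k. k \<le> i}"
      using assms(1-3) by force
  qed simp
  then show ?thesis
    unfolding argmax_upto_def using assms(1,3,4) by force
qed

lemma sat_attn_index:
  assumes "i < dim_row X" "l < dim_col WV"
    and "\<And>j. j \<le> i \<Longrightarrow> (X * WQ * transpose_mat (X * WK)) $$ (i, j) = s j"
  shows "sat_attn X WQ WK WV $$ (i, l)
           = (\<Sum>j\<in>argmax_upto s i. (X * WV) $$ (j, l)) / card (argmax_upto s i)"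
proof -
  let ?S = "X * WQ * transpose_mat (X * WK)"
  have "{?S $$ (i, k) | k. k \<le> i} = {s k | k. k \<le> i}"
    using assms(3) by metis
  then have "{j. j \<le> i \<and> ?S $$ (i, j) = Max {?S $$ (i, k) | k. k \<le> i}} = argmax_upto s i"
    unfolding argmax_upto_def using assms(3) by auto
  then show ?thesis
    unfolding sat_attn_def Let_def using assms(1,2) by simp
qed

lemma sat_attn_top_or_first_row:
  fixes s :: "nat \<Rightarrow> real"
  assumes "i < dim_row X" "l < dim_col WV"
    and "\<And>j. j \<le> i \<Longrightarrow> (X * WQ * transpose_mat (X * WK)) $$ (i, j) = s j"
    and "T \<subseteq> {0<..i}" "s 0 = \<gamma>" "\<gamma> < m"
    and top: "\<And>j. j \<in> T \<Longrightarrow> s j = m"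
    and below: "\<And>j. 0 < j \<Longrightarrow> j \<le> i \<Longrightarrow> j \<notin> T \<Longrightarrow> s j < \<gamma>"
  shows "sat_attn X WQ WK WV $$ (i, l)
           = (if T = {} then (X * WV) $$ (0, l) else (\<Sum>j\<in>T. (X * WV) $$ (j, l)) / card T)"
proof (cases "T = {}")
  case True
  have "argmax_upto s i = {0}"
    by (rule argmax_upto_eqI) (use True below assms(5) in auto)
  then show ?thesis
    using sat_attn_index[OF assms(1-3)] True by simp
next
  case False
  have "argmax_upto s i = T"
  proof (rule argmax_upto_eqI[OF _ False top])
    show "s j < m" if "j \<le> i" "j \<notin> T" for j
      using below[OF _ that] assms(5,6) by (cases "j = 0") force+
  qed (use assms(4) in auto)
  then show ?thesis
    using sat_attn_index[OF assms(1-3)] False by simp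
qed

section \<open>Literal coordinates and the input matrix\<close>

lemma index_mult_mat_sum:
  assumes "X \<in> carrier_mat n m" "W \<in> carrier_mat m d" "i < n" "j < d"
  shows "(X * W) $$ (i, j) = (\<Sum>t<m. X $$ (i, t) * W $$ (t, j))"
  using assms by (simp add: scalar_prod_def atLeast0LessThan)

lemma index_mult_mat_vec_sum:
  assumes "X \<in> carrier_mat n m" "dim_vec v = m" "i < n"
  shows "(X *\<^sub>v v) $ i = (\<Sum>t<m. X $$ (i, t) * v $ t)"
  using assms by (simp add: scalar_prod_def atLeast0LessThan)

lemma sum_two_deltas:
  fixes n :: nat
  assumes "k < n" "k' < n" "k \<noteq> k'"
  shows "(\<Sum>t<n. (if t = k then a else if t = k' then b else 0) * f t) = a * f k + b * (f k' :: real)"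
proof -
  have "(\<Sum>t<n. (if t = k then a else if t = k' then b else 0) * f t)
      = (\<Sum>t<n. (if t = k then a * f k else 0) + (if t = k' then b * f k' else 0))"
    using assms by (intro sum.cong) auto
  also have "\<dots> = a * f k + b * f k'"
    using assms by (simp add: sum.distrib sum.delta)
  finally show ?thesis .
qed

lemma sum_lessThan_2p2:
  fixes p :: nat
  shows "(\<Sum>t<2 * p + 2. f t) = (\<Sum>t<2 * p. f t) + f (2 * p) + (f (2 * p + 1) :: real)"
  by (simp add: numeral_2_eq_2)

definition lit_of_coord :: "nat \<Rightarrow> nat \<Rightarrow> lit" where
  "lit_of_coord p k = (if k < p then (k, True) else (k - p, False))"

definition neg_coord :: "nat \<Rightarrow> nat \<Rightarrow> nat" where
  "neg_coord p k = (if k < p then k + p else k - p)"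

lemma enc_index: "k < 2 * p \<Longrightarrow> enc p B $ k = of_bool (lit_of_coord p k \<in> B)"
  unfolding enc_def lit_of_coord_def by simp

lemma neg_coord_less: "k < 2 * p \<Longrightarrow> neg_coord p k < 2 * p"
  by (auto simp: neg_coord_def)

lemma neg_coord_neq: "k < 2 * p \<Longrightarrow> neg_coord p k \<noteq> k"
  by (auto simp: neg_coord_def)

lemma lit_of_neg_coord: "k < 2 * p \<Longrightarrow> lit_of_coord p (neg_coord p k) = neg_lit (lit_of_coord p k)"
  by (auto simp: neg_coord_def lit_of_coord_def neg_lit_def)

lemma bij_betw_lit_of_coord: "bij_betw (lit_of_coord p) {..<2 * p} (lits p)"
  by (rule bij_betw_byWitness[where f'="\<lambda>(v, b). if b then v else v + p"])
     (auto simp: lit_of_coord_def lits_def)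

lemma lit_of_coord_in_lits: "k < 2 * p \<Longrightarrow> lit_of_coord p k \<in> lits p"
  using bij_betw_lit_of_coord[of p] by (auto simp: bij_betw_def)

lemma finite_lits: "finite (lits p)"
  unfolding lits_def by simp

lemma finite_wf_litset: "wf_litset p B \<Longrightarrow> finite B"
  unfolding wf_litset_def using finite_lits finite_subset by blast

lemma sum_coords_indicator:
  assumes "B \<subseteq> lits p"
  shows "(\<Sum>k<2 * p. g (lit_of_coord p k) * of_bool (lit_of_coord p k \<in> B)) = (\<Sum>l\<in>B. g l :: real)"
proof -
  have "(\<Sum>k<2 * p. g (lit_of_coord p k) * of_bool (lit_of_coord p k \<in> B))
      = (\<Sum>l\<in>lits p. g l * of_bool (l \<in> B))"
    by (rule sum.reindex_bij_betw[OF bij_betw_lit_of_coord])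
  also have "\<dots> = (\<Sum>l\<in>lits p \<inter> B. g l)"
    using finite_lits by (simp add: sum_mult_of_bool_eq Int_def)
  finally show ?thesis
    using assms by (simp add: Int_absorb1)
qed

lemma sum_lit_weights:
  fixes \<alpha> \<delta> \<beta> :: real
  assumes "finite E"
  shows "(\<Sum>l\<in>E. \<alpha> * of_bool (l \<in> B) + \<delta> * of_bool (neg_lit l \<in> B) + \<beta>)
     = \<alpha> * card (E \<inter> B) + \<delta> * card {l \<in> E. neg_lit l \<in> B} + \<beta> * card E"
proof -
  have "(\<Sum>l\<in>E. \<alpha> * of_bool (l \<in> B) + \<delta> * of_bool (neg_lit l \<in> B) + \<beta>)
     = \<alpha> * (\<Sum>l\<in>E. of_bool (l \<in> B)) + \<delta> * (\<Sum>l\<in>E. of_bool (neg_lit l \<in> B)) + \<beta> * card E"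
    by (simp add: sum.distrib sum_distrib_left)
  then show ?thesis
    using assms by (simp add: Int_def Collect_conj_eq[symmetric])
qed

lemma card_filter_add_compl:
  "finite C \<Longrightarrow> card {l \<in> C. P l} + card {l \<in> C. \<not> P l} = card C"
  by (subst card_Un_disjoint[symmetric]) (auto intro: arg_cong[where f = card])

definition row_lits :: "lit set list \<Rightarrow> lit set \<Rightarrow> nat \<Rightarrow> lit set" where
  "row_lits F A j = (if j = 0 then {} else if j \<le> length F then F ! (j - 1) else A)"

lemma row_lits_0 [simp]: "row_lits F A 0 = {}"
  and row_lits_assignment [simp]: "length F < j \<Longrightarrow> row_lits F A j = A"
  by (simp_all add: row_lits_def)

lemma row_lits_in_set: "0 < j \<Longrightarrow> j \<le> length F \<Longrightarrow> row_lits F A j \<in> set F"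
  by (simp add: row_lits_def)

lemma in_set_conv_row_lits:
  "C \<in> set F \<longleftrightarrow> (\<exists>j. 0 < j \<and> j \<le> length F \<and> C = row_lits F A j)"
proof
  assume "C \<in> set F"
  then obtain i where "i < length F" "C = F ! i"
    by (auto simp: in_set_conv_nth)
  then show "\<exists>j. 0 < j \<and> j \<le> length F \<and> C = row_lits F A j"
    by (intro exI[of _ "i + 1"]) (simp add: row_lits_def)
qed (auto simp: row_lits_def)

lemma inputX_carrier: "inputX p F A \<in> carrier_mat (length F + 2) (2 * p + 2)"
  unfolding inputX_def by simp

lemma inputX_index:
  assumes "j < length F + 2" "k < 2 * p + 2"
  shows "inputX p F A $$ (j, k) = (if k < 2 * p then of_bool (lit_of_coord p k \<in> row_lits F A j)
                                   else if k = 2 * p then of_bool (j = 0) else 1)"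
  using assms unfolding inputX_def row_lits_def by (auto simp: enc_index)

section \<open>Query and value matrices\<close>

definition query_mat :: "nat \<Rightarrow> real \<Rightarrow> real \<Rightarrow> real \<Rightarrow> real \<Rightarrow> real mat" where
  "query_mat p \<alpha> \<delta> \<beta> \<gamma> = mat (2 * p + 2) (2 * p + 2) (\<lambda>(t, k).
     if k < 2 * p then (if t = k then \<alpha> else if t = neg_coord p k then \<delta>
                        else if t = 2 * p + 1 then \<beta> else 0)
     else if t = 2 * p + 1 \<and> k = 2 * p then \<gamma> else 0)"

lemma query_mat_carrier: "query_mat p \<alpha> \<delta> \<beta> \<gamma> \<in> carrier_mat (2 * p + 2) (2 * p + 2)"
  unfolding query_mat_def by simp

lemma inputX_mult_query_mat:
  assumes i: "i < length F + 2" and k: "k < 2 * p + 2"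
  shows "(inputX p F A * query_mat p \<alpha> \<delta> \<beta> \<gamma>) $$ (i, k)
    = (if k < 2 * p then \<alpha> * of_bool (lit_of_coord p k \<in> row_lits F A i)
                         + \<delta> * of_bool (neg_lit (lit_of_coord p k) \<in> row_lits F A i) + \<beta>
       else if k = 2 * p then \<gamma> else 0)"
proof -
  let ?X = "inputX p F A" and ?Q = "query_mat p \<alpha> \<delta> \<beta> \<gamma>"
  have "(?X * ?Q) $$ (i, k) = (\<Sum>t<2 * p + 2. ?X $$ (i, t) * ?Q $$ (t, k))"
    by (rule index_mult_mat_sum[OF inputX_carrier query_mat_carrier i k])
  also have "\<dots> = (\<Sum>t<2 * p. ?X $$ (i, t) * ?Q $$ (t, k))
                   + (if k < 2 * p then \<beta> else if k = 2 * p then \<gamma> else 0)"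
    using i k by (auto simp: sum_lessThan_2p2 inputX_index query_mat_def neg_coord_def)
  also have "(\<Sum>t<2 * p. ?X $$ (i, t) * ?Q $$ (t, k))
      = (if k < 2 * p then \<alpha> * of_bool (lit_of_coord p k \<in> row_lits F A i)
                         + \<delta> * of_bool (neg_lit (lit_of_coord p k) \<in> row_lits F A i) else 0)"
  proof (cases "k < 2 * p")
    case True
    have "(\<Sum>t<2 * p. ?X $$ (i, t) * ?Q $$ (t, k))
        = (\<Sum>t<2 * p. (if t = k then \<alpha> else if t = neg_coord p k then \<delta> else 0)
                        * of_bool (lit_of_coord p t \<in> row_lits F A i))"
      using i True by (intro sum.cong) (auto simp: inputX_index query_mat_def)
    also have "\<dots> = \<alpha> * of_bool (lit_of_coord p k \<in> row_lits F A i)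
                     + \<delta> * of_bool (lit_of_coord p (neg_coord p k) \<in> row_lits F A i)"
      using True by (intro sum_two_deltas neg_coord_less neg_coord_neq[symmetric])
    finally show ?thesis
      using True by (simp add: lit_of_neg_coord)
  qed (use k in \<open>auto simp: query_mat_def intro!: sum.neutral\<close>)
  finally show ?thesis
    by simp
qed

lemma inputX_last_row_attn:
  fixes \<sigma> :: "lit set \<Rightarrow> real"
  assumes "l < dim_col WV"
    and score: "\<And>j. j \<le> length F + 1 \<Longrightarrow>
      (inputX p F A * WQ * transpose_mat (inputX p F A * WK)) $$ (length F + 1, j)
        = \<sigma> (row_lits F A j) + \<gamma> * of_bool (j = 0)"
    and "\<sigma> {} = 0" "\<sigma> A < \<gamma>" "\<gamma> < m"
    and top: "\<And>C. C \<in> set F \<Longrightarrow> P C \<Longrightarrow> \<sigma> C = m"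
    and low: "\<And>C. C \<in> set F \<Longrightarrow> \<not> P C \<Longrightarrow> \<sigma> C < \<gamma>"
  defines "T \<equiv> {j. 0 < j \<and> j \<le> length F \<and> P (row_lits F A j)}"
  shows "sat_attn (inputX p F A) WQ WK WV $$ (length F + 1, l)
    = (if \<exists>C\<in>set F. P C then (\<Sum>j\<in>T. (inputX p F A * WV) $$ (j, l)) / card T
       else (inputX p F A * WV) $$ (0, l))"
proof -
  let ?s = "\<lambda>j. \<sigma> (row_lits F A j) + \<gamma> * of_bool (j = 0)"
  have classify: "(j \<in> T \<and> ?s j = m) \<or> (j \<notin> T \<and> ?s j < \<gamma>)"
    if j: "0 < j" "j \<le> length F + 1" for j
  proof (cases "j = length F + 1")
    case True
    then show ?thesis
      using assms(4) by (simp add: T_def)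
  next
    case False
    then have "j \<le> length F"
      using j by simp
    have "row_lits F A j \<in> set F"
      using j(1) \<open>j \<le> length F\<close> by (rule row_lits_in_set)
    then show ?thesis
      using top low j(1) \<open>j \<le> length F\<close> by (cases "P (row_lits F A j)") (simp_all add: T_def)
  qed
  have "sat_attn (inputX p F A) WQ WK WV $$ (length F + 1, l)
    = (if T = {} then (inputX p F A * WV) $$ (0, l)
       else (\<Sum>j\<in>T. (inputX p F A * WV) $$ (j, l)) / card T)"
  proof (rule sat_attn_top_or_first_row[where s = ?s and m = m and \<gamma> = \<gamma>])
    show "length F + 1 < dim_row (inputX p F A)"
      using inputX_carrier[of p F A] by simp
    show "(inputX p F A * WQ * transpose_mat (inputX p F A * WK)) $$ (length F + 1, j) = ?s j"
      if "j \<le> length F + 1" for j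
      using that by (rule score)
    show "?s j = m" if "j \<in> T" for j
      using classify[of j] that by (auto simp: T_def)
    show "?s j < \<gamma>" if "0 < j" "j \<le> length F + 1" "j \<notin> T" for j
      using classify[OF that(1,2)] that(3) by blast
  qed (use assms(1,3,5) in \<open>auto simp: T_def\<close>)
  moreover have "T = {} \<longleftrightarrow> \<not> (\<exists>C\<in>set F. P C)"
    unfolding T_def by (auto simp: in_set_conv_row_lits[where A = A] dest: row_lits_in_set[where A = A])
  ultimately show ?thesis
    by simp
qed

definition first_row_indicator :: "nat \<Rightarrow> real mat" where
  "first_row_indicator p = mat (2 * p + 2) 1 (\<lambda>(t, _). of_bool (t = 2 * p))"

definition later_rows_indicator :: "nat \<Rightarrow> real mat" where
  "later_rows_indicator p = mat (2 * p + 2) 1 (\<lambda>(t, _). of_bool (t = 2 * p + 1) - of_bool (t = 2 * p))"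

definition lits_proj :: "nat \<Rightarrow> real mat" where
  "lits_proj p = mat (2 * p + 2) (2 * p) (\<lambda>(t, k). of_bool (t = k))"

lemma inputX_mult_first_row_indicator:
  "j < length F + 2 \<Longrightarrow> (inputX p F A * first_row_indicator p) $$ (j, 0) = of_bool (j = 0)"
  by (subst index_mult_mat_sum[OF inputX_carrier, where d = 1])
     (simp_all add: first_row_indicator_def sum_lessThan_2p2 inputX_index)

lemma inputX_mult_later_rows_indicator:
  "j < length F + 2 \<Longrightarrow> (inputX p F A * later_rows_indicator p) $$ (j, 0) = of_bool (j \<noteq> 0)"
  by (subst index_mult_mat_sum[OF inputX_carrier, where d = 1])
     (simp_all add: later_rows_indicator_def sum_lessThan_2p2 inputX_index)

lemma inputX_mult_lits_proj:
  assumes "j < length F + 2" "k < 2 * p"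
  shows "(inputX p F A * lits_proj p) $$ (j, k) = of_bool (lit_of_coord p k \<in> row_lits F A j)"
proof -
  have "(inputX p F A * lits_proj p) $$ (j, k) = (\<Sum>t<2 * p + 2. inputX p F A $$ (j, t) * of_bool (t = k))"
    using assms by (subst index_mult_mat_sum[OF inputX_carrier, where d = "2 * p"])
                   (simp_all add: lits_proj_def)
  also have "\<dots> = inputX p F A $$ (j, k)"
    using assms(2) by (simp add: sum.delta)
  finally show ?thesis
    using assms by (simp add: inputX_index)
qed

section \<open>Unit clauses and the clamping layer\<close>

definition unit_clause :: "lit set \<Rightarrow> lit set \<Rightarrow> bool" where
  "unit_clause A C \<longleftrightarrow> C \<inter> A = {} \<and> card {l \<in> C. neg_lit l \<notin> A} = 1"

lemma unit_implies_iff: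
  "unit_implies F A m \<longleftrightarrow> neg_lit m \<notin> A \<and> (\<exists>C\<in>set F. unit_clause A C \<and> m \<in> C)"
proof
  assume "unit_implies F A m"
  then obtain C where C: "C \<in> set F" "C \<inter> A = {}" and unit: "{l \<in> C. neg_lit l \<notin> A} = {m}"
    unfolding unit_implies_def by blast
  have "m \<in> {l \<in> C. neg_lit l \<notin> A}"
    unfolding unit by simp
  then show "neg_lit m \<notin> A \<and> (\<exists>C\<in>set F. unit_clause A C \<and> m \<in> C)"
    using C unit unfolding unit_clause_def by auto
next
  assume "neg_lit m \<notin> A \<and> (\<exists>C\<in>set F. unit_clause A C \<and> m \<in> C)"
  then obtain C where C: "C \<in> set F" "unit_clause A C" "m \<in> C" and m: "neg_lit m \<notin> A"
    by blast
  then obtain m' where "{l \<in> C. neg_lit l \<notin> A} = {m'}"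
    unfolding unit_clause_def by (meson card_1_singletonE)
  moreover have "m \<in> {l \<in> C. neg_lit l \<notin> A}"
    using C(3) m by blast
  ultimately have "{l \<in> C. neg_lit l \<notin> A} = {m}"
    by auto
  then show "unit_implies F A m"
    using C unfolding unit_implies_def unit_clause_def by blast
qed

lemma card_ratio_bounds:
  fixes T Q :: "'a set"
  assumes "finite T" "T \<noteq> {}" "card T \<le> n"
  defines "u \<equiv> real (card (T \<inter> Q)) / card T"
  shows "0 \<le> u" "u \<le> 1" "0 < u \<longleftrightarrow> T \<inter> Q \<noteq> {}" "0 < u \<Longrightarrow> 1 \<le> n * u"
proof -
  have T: "0 < card T"
    using assms(1,2) by (simp add: card_gt_0_iff)
  have TQ: "card (T \<inter> Q) \<le> card T"
    using assms(1) by (simp add: card_mono)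
  show "0 \<le> u" "u \<le> 1"
    unfolding u_def using T TQ by simp_all
  show pos: "0 < u \<longleftrightarrow> T \<inter> Q \<noteq> {}"
    unfolding u_def using T assms(1) by (simp add: zero_less_divide_iff card_gt_0_iff)
  show "1 \<le> n * u" if "0 < u"
  proof -
    have "1 \<le> card (T \<inter> Q)"
      using that pos assms(1) by (simp add: Suc_le_eq card_gt_0_iff)
    then have "real (card T) \<le> real n * card (T \<inter> Q)"
      using assms(3) by (metis mult_1_right mult_mono of_nat_0_le_iff of_nat_1 of_nat_le_iff)
    then show ?thesis
      unfolding u_def using T by (simp add: field_simps)
  qed
qed

definition clamp_gate :: "real mat \<Rightarrow> real mat" where
  "clamp_gate L = mat (2 * dim_row L) (dim_col L) (\<lambda>(t, i). L $$ (t mod dim_row L, i))"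

definition clamp_shift :: "nat \<Rightarrow> real vec" where
  "clamp_shift d = vec (2 * d) (\<lambda>t. if t < d then 0 else -1)"

definition clamp_out :: "nat \<Rightarrow> real mat" where
  "clamp_out d = mat d (2 * d) (\<lambda>(k, t). if t = k then 1 else if t = k + d then -1 else 0)"

lemma relu_diff_eq_clamp: "max 0 z - max 0 (z - 1) = max 0 (min 1 (z :: real))"
  by (simp add: max_def min_def)

lemma reglu_mlp_clamp:
  assumes L: "L \<in> carrier_mat d n" and x: "dim_vec x = n"
  shows "reglu_mlp (0\<^sub>m (2 * d) n) (vec (2 * d) (\<lambda>_. 1)) (clamp_gate L) (clamp_shift d) (clamp_out d)
           (0\<^sub>v d) x
    = vec d (\<lambda>k. max 0 (min 1 ((L *\<^sub>v x) $ k)))"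
proof -
  define h where "h = vec (2 * d) (\<lambda>t. (0\<^sub>m (2 * d) n *\<^sub>v x + vec (2 * d) (\<lambda>_. 1)) $ t
                                      * max 0 ((clamp_gate L *\<^sub>v x + clamp_shift d) $ t))"
  have h: "h $ t = max 0 ((L *\<^sub>v x) $ (t mod d) - of_bool (d \<le> t))" if "t < 2 * d" for t
  proof -
    have "row (clamp_gate L) t = row L (t mod d)"
      using L that by (intro eq_vecI) (auto simp: clamp_gate_def)
    then have "(clamp_gate L *\<^sub>v x) $ t = (L *\<^sub>v x) $ (t mod d)"
      using L that by (simp add: clamp_gate_def)
    moreover have "row (0\<^sub>m (2 * d) n) t \<bullet> x = 0"
      using x that by (simp add: scalar_prod_def)
    ultimately show ?thesis
      unfolding h_def using that by (simp add: clamp_shift_def)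
  qed
  have out: "reglu_mlp (0\<^sub>m (2 * d) n) (vec (2 * d) (\<lambda>_. 1)) (clamp_gate L) (clamp_shift d)
               (clamp_out d) (0\<^sub>v d) x = clamp_out d *\<^sub>v h"
    unfolding reglu_mlp_def index_zero_mat(2) h_def[symmetric]
    by (rule right_zero_vec, rule carrier_vecI) (simp add: clamp_out_def)
  show ?thesis
    unfolding out
  proof (rule eq_vecI)
    fix k assume "k < dim_vec (vec d (\<lambda>k. max 0 (min 1 ((L *\<^sub>v x) $ k))))"
    then have k: "k < d"
      by simp
    have "(clamp_out d *\<^sub>v h) $ k = (\<Sum>t<2 * d. (if t = k then 1 else if t = k + d then -1 else 0) * h $ t)"
      using k by (simp add: clamp_out_def scalar_prod_def atLeast0LessThan, simp add: h_def)
    also have "\<dots> = h $ k - h $ (k + d)"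
      using k by (subst sum_two_deltas) auto
    also have "\<dots> = max 0 (min 1 ((L *\<^sub>v x) $ k))"
      using k by (simp add: h relu_diff_eq_clamp)
    finally show "(clamp_out d *\<^sub>v h) $ k = vec d (\<lambda>k. max 0 (min 1 ((L *\<^sub>v x) $ k))) $ k"
      using k by simp
  qed (simp add: clamp_out_def)
qed

lemma clamp_gap_indicator:
  fixes u K :: real
  assumes "0 \<le> u" "u \<le> 1" "0 \<le> K" "0 < u \<Longrightarrow> 1 \<le> K * u"
  shows "max 0 (min 1 (K * u - K * of_bool P)) = of_bool (\<not> P \<and> 0 < u)"
proof (cases P)
  case True
  have "K * u \<le> K"
    using assms(2,3) by (simp add: mult_left_le)
  then show ?thesis
    using True by simp
next
  case False
  then show ?thesis
    using assms by (cases "u = 0") auto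
qed

definition unit_readout :: "nat \<Rightarrow> real \<Rightarrow> real mat" where
  "unit_readout p K = mat (2 * p) (2 * p + (2 * p + 2))
     (\<lambda>(k, i). if i = k then K else if i = 2 * p + neg_coord p k then - K else 0)"

lemma unit_readout_carrier: "unit_readout p K \<in> carrier_mat (2 * p) (2 * p + (2 * p + 2))"
  unfolding unit_readout_def by simp

lemma unit_readout_mult_vec:
  assumes "dim_vec x = 2 * p + (2 * p + 2)" "k < 2 * p"
  shows "(unit_readout p K *\<^sub>v x) $ k = K * x $ k - K * x $ (2 * p + neg_coord p k)"
proof -
  have "(unit_readout p K *\<^sub>v x) $ k = (\<Sum>i<2 * p + (2 * p + 2). unit_readout p K $$ (k, i) * x $ i)"
    using unit_readout_carrier assms(1) by (rule index_mult_mat_vec_sum) (use assms(2) in simp)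
  also have "\<dots> = (\<Sum>i<2 * p + (2 * p + 2).
                     (if i = k then K else if i = 2 * p + neg_coord p k then - K else 0) * x $ i)"
    using assms(2) by (intro sum.cong) (auto simp: unit_readout_def)
  also have "\<dots> = K * x $ k - K * x $ (2 * p + neg_coord p k)"
    using assms(2) neg_coord_less[OF assms(2)] by (subst sum_two_deltas) auto
  finally show ?thesis .
qed

section \<open>The three heads on a fixed instance\<close>

locale sat_instance =
  fixes p :: nat and F :: "lit set list" and A :: "lit set"
  assumes clauses: "\<forall>C\<in>set F. clause3 p C" and assignment: "wf_litset p A"
begin

lemma row_lits_subset: "row_lits F A j \<subseteq> lits p"
  using clauses assignment nth_mem[of "j - 1" F]
  unfolding row_lits_def clause3_def wf_litset_def by auto

lemma finite_row_lits: "finite (row_lits F A j)"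
  using row_lits_subset finite_lits finite_subset by blast

lemma finite_clause: "C \<in> set F \<Longrightarrow> finite C"
  using clauses finite_wf_litset unfolding clause3_def by blast

lemma card_clause: "C \<in> set F \<Longrightarrow> card C = 3"
  using clauses unfolding clause3_def by blast

lemma assignment_consistent: "{l \<in> A. neg_lit l \<in> A} = {}"
proof -
  have "neg_lit (v, b) \<notin> A" if "(v, b) \<in> A" for v b
    using assignment that unfolding wf_litset_def neg_lit_def by (cases b) auto
  then show ?thesis
    by auto
qed

lemma attn_score:
  assumes "i < length F + 2" "j < length F + 2"
  shows "(inputX p F A * query_mat p \<alpha> \<delta> \<beta> \<gamma> * transpose_mat (inputX p F A * 1\<^sub>m (2 * p + 2))) $$ (i, j)
    = \<alpha> * card (row_lits F A j \<inter> row_lits F A i)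
      + \<delta> * card {l \<in> row_lits F A j. neg_lit l \<in> row_lits F A i}
      + \<beta> * card (row_lits F A j) + \<gamma> * of_bool (j = 0)"
proof -
  let ?X = "inputX p F A" and ?E = "row_lits F A"
  let ?g = "\<lambda>l. \<alpha> * of_bool (l \<in> ?E i) + \<delta> * of_bool (neg_lit l \<in> ?E i) + \<beta>"
  have "(?X * query_mat p \<alpha> \<delta> \<beta> \<gamma> * transpose_mat (?X * 1\<^sub>m (2 * p + 2))) $$ (i, j)
      = (\<Sum>k<2 * p + 2. (?X * query_mat p \<alpha> \<delta> \<beta> \<gamma>) $$ (i, k) * ?X $$ (j, k))"
  proof -
    have XQ: "?X * query_mat p \<alpha> \<delta> \<beta> \<gamma> \<in> carrier_mat (length F + 2) (2 * p + 2)"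
      using inputX_carrier query_mat_carrier by (rule mult_carrier_mat)
    have XT: "transpose_mat ?X \<in> carrier_mat (2 * p + 2) (length F + 2)"
      using inputX_carrier by (simp only: transpose_carrier_mat)
    have "(?X * query_mat p \<alpha> \<delta> \<beta> \<gamma> * transpose_mat ?X) $$ (i, j)
        = (\<Sum>k<2 * p + 2. (?X * query_mat p \<alpha> \<delta> \<beta> \<gamma>) $$ (i, k) * transpose_mat ?X $$ (k, j))"
      using XQ XT assms by (rule index_mult_mat_sum)
    then show ?thesis
      using assms inputX_carrier[of p F A] by (simp add: right_mult_one_mat)
  qed
  also have "\<dots> = (\<Sum>k<2 * p. ?g (lit_of_coord p k) * of_bool (lit_of_coord p k \<in> ?E j))
                   + \<gamma> * of_bool (j = 0)"
    using assms by (simp add: sum_lessThan_2p2 inputX_mult_query_mat inputX_index)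
  also have "\<dots> = (\<Sum>l\<in>?E j. ?g l) + \<gamma> * of_bool (j = 0)"
    by (simp only: sum_coords_indicator[OF row_lits_subset, where g = ?g])
  also have "(\<Sum>l\<in>?E j. ?g l) = \<alpha> * card (?E j \<inter> ?E i)
      + \<delta> * card {l \<in> ?E j. neg_lit l \<in> ?E i} + \<beta> * card (?E j)"
    using finite_row_lits by (rule sum_lit_weights)
  finally show ?thesis .
qed

lemma last_row_score:
  assumes "j \<le> length F + 1"
  shows "(inputX p F A * query_mat p \<alpha> \<delta> \<beta> \<gamma> * transpose_mat (inputX p F A * 1\<^sub>m (2 * p + 2)))
           $$ (length F + 1, j)
    = (\<alpha> * card (row_lits F A j \<inter> A) + \<delta> * card {l \<in> row_lits F A j. neg_lit l \<in> A}
       + \<beta> * card (row_lits F A j)) + \<gamma> * of_bool (j = 0)"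
  using attn_score[of "length F + 1" j] assms by simp

lemma sat_head:
  "sat_attn (inputX p F A) (query_mat p (-2) 0 1 2) (1\<^sub>m (2 * p + 2)) (first_row_indicator p)
     $$ (length F + 1, 0) = (if sat_models A F then 1 else 0)"
proof -
  let ?T = "{j. 0 < j \<and> j \<le> length F \<and> row_lits F A j \<inter> A = {}}"
  have "sat_attn (inputX p F A) (query_mat p (-2) 0 1 2) (1\<^sub>m (2 * p + 2)) (first_row_indicator p)
          $$ (length F + 1, 0)
    = (if \<exists>C\<in>set F. C \<inter> A = {} then (\<Sum>j\<in>?T. (inputX p F A * first_row_indicator p) $$ (j, 0)) / card ?T
       else (inputX p F A * first_row_indicator p) $$ (0, 0))"
  proof (rule inputX_last_row_attn[where \<sigma> = "\<lambda>C. - 2 * real (card (C \<inter> A)) + real (card C)"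
                                    and \<gamma> = 2 and m = 3])
    fix C assume "C \<in> set F" "C \<inter> A \<noteq> {}"
    then have "1 \<le> card (C \<inter> A)"
      using finite_clause by (simp add: Suc_le_eq card_gt_0_iff)
    then show "- 2 * real (card (C \<inter> A)) + real (card C) < 2"
      using card_clause \<open>C \<in> set F\<close> by simp
  qed (auto simp only: last_row_score, auto simp: card_clause first_row_indicator_def)
  moreover have "sat_models A F \<longleftrightarrow> \<not> (\<exists>C\<in>set F. C \<inter> A = {})"
    unfolding sat_models_def by blast
  ultimately show ?thesis
    by (simp add: inputX_mult_first_row_indicator)
qed

lemma refute_head:
  "sat_attn (inputX p F A) (query_mat p 0 1 0 (5/2)) (1\<^sub>m (2 * p + 2)) (later_rows_indicator p)
     $$ (length F + 1, 0) = (if refutes F A then 1 else 0)"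
proof -
  let ?T = "{j. 0 < j \<and> j \<le> length F \<and> (\<forall>l\<in>row_lits F A j. neg_lit l \<in> A)}"
  have "sat_attn (inputX p F A) (query_mat p 0 1 0 (5/2)) (1\<^sub>m (2 * p + 2)) (later_rows_indicator p)
          $$ (length F + 1, 0)
    = (if \<exists>C\<in>set F. \<forall>l\<in>C. neg_lit l \<in> A
       then (\<Sum>j\<in>?T. (inputX p F A * later_rows_indicator p) $$ (j, 0)) / card ?T
       else (inputX p F A * later_rows_indicator p) $$ (0, 0))"
  proof (rule inputX_last_row_attn[where \<sigma> = "\<lambda>C. real (card {l \<in> C. neg_lit l \<in> A})"
                                    and \<gamma> = "5/2" and m = 3])
    fix C assume "C \<in> set F" "\<forall>l\<in>C. neg_lit l \<in> A"
    then have "{l \<in> C. neg_lit l \<in> A} = C"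
      by blast
    then show "real (card {l \<in> C. neg_lit l \<in> A}) = 3"
      using card_clause \<open>C \<in> set F\<close> by simp
  next
    fix C assume C: "C \<in> set F" "\<not> (\<forall>l\<in>C. neg_lit l \<in> A)"
    then have "card {l \<in> C. neg_lit l \<in> A} < card C"
      using finite_clause by (intro psubset_card_mono) auto
    then show "real (card {l \<in> C. neg_lit l \<in> A}) < 5/2"
      using card_clause[OF C(1)] by simp
  qed (auto simp only: last_row_score,
       auto simp: card_clause assignment_consistent later_rows_indicator_def)
  moreover have "(\<Sum>j\<in>?T. (inputX p F A * later_rows_indicator p) $$ (j, 0)) = card ?T"
    by (simp add: inputX_mult_later_rows_indicator)
  moreover have "?T \<noteq> {}" if refuted: "refutes F A"
  proof -
    obtain C where C: "C \<in> set F" "\<forall>l\<in>C. neg_lit l \<in> A"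
      using refuted unfolding refutes_def by blast
    then obtain j where "0 < j" "j \<le> length F" "C = row_lits F A j"
      using in_set_conv_row_lits[of C F A] by blast
    then show ?thesis
      using C(2) by auto
  qed
  ultimately show ?thesis
    by (auto simp: inputX_mult_later_rows_indicator refutes_def)
qed

lemma unit_clause_score:
  assumes "\<not> refutes F A" "C \<in> set F"
  shows "unit_clause A C \<Longrightarrow>
           - 3 * real (card (C \<inter> A)) + real (card {l \<in> C. neg_lit l \<in> A}) = 2"
    and "\<not> unit_clause A C \<Longrightarrow>
           - 3 * real (card (C \<inter> A)) + real (card {l \<in> C. neg_lit l \<in> A}) \<le> 1"
proof -
  have falsified: "card {l \<in> C. neg_lit l \<in> A} + card {l \<in> C. neg_lit l \<notin> A} = 3"
    using card_filter_add_compl[OF finite_clause[OF assms(2)]] card_clause[OF assms(2)] by simp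
  have "{l \<in> C. neg_lit l \<notin> A} \<noteq> {}"
    using assms unfolding refutes_def by blast
  then have not_refuted: "0 < card {l \<in> C. neg_lit l \<notin> A}"
    using finite_clause[OF assms(2)] by (simp add: card_gt_0_iff)
  show "- 3 * real (card (C \<inter> A)) + real (card {l \<in> C. neg_lit l \<in> A}) = 2" if "unit_clause A C"
    using that falsified unfolding unit_clause_def by simp
  show "- 3 * real (card (C \<inter> A)) + real (card {l \<in> C. neg_lit l \<in> A}) \<le> 1" if "\<not> unit_clause A C"
  proof (cases "C \<inter> A = {}")
    case True
    then have "card {l \<in> C. neg_lit l \<notin> A} \<noteq> 1"
      using that unfolding unit_clause_def by blast
    then show ?thesis
      using True falsified not_refuted by simp
  next
    case False
    then have "0 < card (C \<inter> A)"
      using finite_clause[OF assms(2)] by (simp add: card_gt_0_iff)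
    then show ?thesis
      using falsified not_refuted by simp
  qed
qed

lemma unit_head:
  assumes "\<not> refutes F A" "k < 2 * p"
  defines "T \<equiv> {j. 0 < j \<and> j \<le> length F \<and> unit_clause A (row_lits F A j)}"
  shows "sat_attn (inputX p F A) (query_mat p (-3) 1 0 (3/2)) (1\<^sub>m (2 * p + 2)) (lits_proj p)
           $$ (length F + 1, k)
    = (if \<exists>C\<in>set F. unit_clause A C
       then card (T \<inter> {j. lit_of_coord p k \<in> row_lits F A j}) / card T else 0)"
proof -
  let ?\<sigma> = "\<lambda>C. - 3 * real (card (C \<inter> A)) + real (card {l \<in> C. neg_lit l \<in> A})"
  have "sat_attn (inputX p F A) (query_mat p (-3) 1 0 (3/2)) (1\<^sub>m (2 * p + 2)) (lits_proj p)
          $$ (length F + 1, k)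
    = (if \<exists>C\<in>set F. unit_clause A C
       then (\<Sum>j\<in>T. (inputX p F A * lits_proj p) $$ (j, k)) / card T
       else (inputX p F A * lits_proj p) $$ (0, k))"
    unfolding T_def
  proof (rule inputX_last_row_attn[where \<sigma> = ?\<sigma> and \<gamma> = "3/2" and m = 2])
    show "?\<sigma> C = 2" if "C \<in> set F" "unit_clause A C" for C
      using unit_clause_score(1)[OF assms(1) that] .
    show "?\<sigma> C < 3/2" if "C \<in> set F" "\<not> unit_clause A C" for C
      using unit_clause_score(2)[OF assms(1) that] by simp
  qed (use assms(2) in \<open>auto simp only: last_row_score,
                          auto simp: assignment_consistent lits_proj_def\<close>)
  also have "(\<Sum>j\<in>T. (inputX p F A * lits_proj p) $$ (j, k))
      = card (T \<inter> {j. lit_of_coord p k \<in> row_lits F A j})"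
    using assms(2) by (simp add: T_def inputX_mult_lits_proj)
  finally show ?thesis
    using assms(2) by (simp add: inputX_mult_lits_proj)
qed

lemma unit_head_bounds:
  assumes "\<not> refutes F A" "k < 2 * p"
  defines "u \<equiv> sat_attn (inputX p F A) (query_mat p (-3) 1 0 (3/2)) (1\<^sub>m (2 * p + 2)) (lits_proj p)
                  $$ (length F + 1, k)"
  shows "0 \<le> u" "u \<le> 1" "0 < u \<longleftrightarrow> (\<exists>C\<in>set F. unit_clause A C \<and> lit_of_coord p k \<in> C)"
    "0 < u \<Longrightarrow> 1 \<le> real (length F) * u"
proof -
  let ?T = "{j. 0 < j \<and> j \<le> length F \<and> unit_clause A (row_lits F A j)}"
  let ?Q = "{j. lit_of_coord p k \<in> row_lits F A j}"
  have unit_rows: "?T \<inter> ?Q \<noteq> {} \<longleftrightarrow> (\<exists>C\<in>set F. unit_clause A C \<and> lit_of_coord p k \<in> C)"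
    using in_set_conv_row_lits[of _ F A] row_lits_in_set[of _ F A] by auto
  have "(0 \<le> u \<and> u \<le> 1) \<and> (0 < u \<longleftrightarrow> ?T \<inter> ?Q \<noteq> {}) \<and> (0 < u \<longrightarrow> 1 \<le> real (length F) * u)"
  proof (cases "\<exists>C\<in>set F. unit_clause A C")
    case True
    then have "?T \<noteq> {}"
      using in_set_conv_row_lits[of _ F A] by auto
    moreover have "?T \<subseteq> {1..length F}"
      by auto
    then have "finite ?T" "card ?T \<le> length F"
      using finite_subset card_mono[of "{1..length F}" ?T] by auto
    moreover have "u = card (?T \<inter> ?Q) / card ?T"
      using unit_head[OF assms(1,2)] True unfolding u_def by simp
    ultimately show ?thesis
      using card_ratio_bounds[of ?T "length F" ?Q] by simp
  next
    case False
    then show ?thesis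
      using unit_head[OF assms(1,2)] row_lits_in_set[of _ F A] unfolding u_def by auto
  qed
  then show "0 \<le> u" "u \<le> 1" "0 < u \<longleftrightarrow> (\<exists>C\<in>set F. unit_clause A C \<and> lit_of_coord p k \<in> C)"
    "0 < u \<Longrightarrow> 1 \<le> real (length F) * u"
    using unit_rows by simp_all
qed

lemma unit_propagation_layer:
  assumes "\<not> refutes F A"
  shows "reglu_mlp (0\<^sub>m (2 * (2 * p)) (2 * p + (2 * p + 2))) (vec (2 * (2 * p)) (\<lambda>_. 1))
      (clamp_gate (unit_readout p (length F))) (clamp_shift (2 * p)) (clamp_out (2 * p)) (0\<^sub>v (2 * p))
      (row (hconcat (sat_attn (inputX p F A) (query_mat p (-3) 1 0 (3/2)) (1\<^sub>m (2 * p + 2)) (lits_proj p))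
                    (inputX p F A)) (length F + 1))
    = enc p {l \<in> lits p. unit_implies F A l}"
proof -
  let ?X = "inputX p F A"
  let ?Att = "sat_attn ?X (query_mat p (-3) 1 0 (3/2)) (1\<^sub>m (2 * p + 2)) (lits_proj p)"
  let ?x = "row (hconcat ?Att ?X) (length F + 1)"
  have X: "dim_row ?X = length F + 2" "dim_col ?X = 2 * p + 2"
    using inputX_carrier by blast+
  have Att: "dim_row ?Att = length F + 2" "dim_col ?Att = 2 * p"
    using X by (simp_all add: sat_attn_def Let_def lits_proj_def)
  have x_dim: "dim_vec ?x = 2 * p + (2 * p + 2)"
    using X Att by (simp add: hconcat_def)
  have x_att: "?x $ k = ?Att $$ (length F + 1, k)" if "k < 2 * p" for k
    using X Att that by (simp add: hconcat_def)
  have x_neg: "?x $ (2 * p + neg_coord p k) = of_bool (neg_lit (lit_of_coord p k) \<in> A)"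
    if "k < 2 * p" for k
    using X Att that neg_coord_less[OF that]
    by (simp add: hconcat_def inputX_index lit_of_neg_coord)
  show ?thesis
    unfolding reglu_mlp_clamp[OF unit_readout_carrier x_dim]
  proof (rule eq_vecI)
    fix k assume "k < dim_vec (enc p {l \<in> lits p. unit_implies F A l})"
    then have k: "k < 2 * p"
      by (simp add: enc_def)
    let ?u = "?Att $$ (length F + 1, k)"
    have readout: "(unit_readout p (length F) *\<^sub>v ?x) $ k
        = real (length F) * ?u - real (length F) * of_bool (neg_lit (lit_of_coord p k) \<in> A)"
      using unit_readout_mult_vec[OF x_dim k] x_att[OF k] x_neg[OF k] by simp
    have "max 0 (min 1 ((unit_readout p (length F) *\<^sub>v ?x) $ k))
        = of_bool (neg_lit (lit_of_coord p k) \<notin> A \<and> 0 < ?u)"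
      unfolding readout by (rule clamp_gap_indicator) (use unit_head_bounds[OF assms k] in auto)
    also have "\<dots> = of_bool (unit_implies F A (lit_of_coord p k))"
      using unit_implies_iff unit_head_bounds(3)[OF assms k] by simp
    also have "\<dots> = enc p {l \<in> lits p. unit_implies F A l} $ k"
      using k lit_of_coord_in_lits by (simp add: enc_index)
    finally show "vec (2 * p) (\<lambda>k. max 0 (min 1 ((unit_readout p (length F) *\<^sub>v ?x) $ k))) $ k
        = enc p {l \<in> lits p. unit_implies F A l} $ k"
      using k by simp
  qed (simp add: enc_def)
qed

end

theorem mainTheorem3:
  fixes p c :: nat
  shows "\<exists>(d1::nat) (WQ1::real mat) WK1 WV1 (d2::nat) (WQ2::real mat) WK2 WV2
           (d3::nat) (WQ3::real mat) WK3 WV3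
           (h::nat) (W1::real mat) (b1::real vec) (Vg::real mat) (b2::real vec)
           (W2::real mat) (b::real vec).
     WQ1 \<in> carrier_mat (2 * p + 2) d1 \<and> WK1 \<in> carrier_mat (2 * p + 2) d1 \<and>
     WV1 \<in> carrier_mat (2 * p + 2) 1 \<and>
     WQ2 \<in> carrier_mat (2 * p + 2) d2 \<and> WK2 \<in> carrier_mat (2 * p + 2) d2 \<and>
     WV2 \<in> carrier_mat (2 * p + 2) 1 \<and>
     WQ3 \<in> carrier_mat (2 * p + 2) d3 \<and> WK3 \<in> carrier_mat (2 * p + 2) d3 \<and>
     WV3 \<in> carrier_mat (2 * p + 2) (2 * p) \<and>
     W1 \<in> carrier_mat h (2 * p + (2 * p + 2)) \<and> b1 \<in> carrier_vec h \<and>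
     Vg \<in> carrier_mat h (2 * p + (2 * p + 2)) \<and> b2 \<in> carrier_vec h \<and>
     W2 \<in> carrier_mat (2 * p) h \<and> b \<in> carrier_vec (2 * p) \<and>
     (\<forall>F A. length F = c \<longrightarrow> (\<forall>C\<in>set F. clause3 p C) \<longrightarrow> wf_litset p A \<longrightarrow>
        sat_attn (inputX p F A) WQ1 WK1 WV1 $$ (c + 1, 0) = (if sat_models A F then 1 else 0) \<and>
        sat_attn (inputX p F A) WQ2 WK2 WV2 $$ (c + 1, 0) = (if refutes F A then 1 else 0) \<and>
        (\<not> refutes F A \<longrightarrow>
           reglu_mlp W1 b1 Vg b2 W2 b
             (row (hconcat (sat_attn (inputX p F A) WQ3 WK3 WV3) (inputX p F A)) (c + 1))
           = enc p {l \<in> lits p. unit_implies F A l}))"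
proof -
  have inst: "sat_instance p F A" if "\<forall>C\<in>set F. clause3 p C" "wf_litset p A" for F A
    using that by unfold_locales
  have carriers: "first_row_indicator p \<in> carrier_mat (2 * p + 2) 1"
    "later_rows_indicator p \<in> carrier_mat (2 * p + 2) 1"
    "lits_proj p \<in> carrier_mat (2 * p + 2) (2 * p)"
    "clamp_gate (unit_readout p c) \<in> carrier_mat (2 * (2 * p)) (2 * p + (2 * p + 2))"
    "clamp_shift (2 * p) \<in> carrier_vec (2 * (2 * p))"
    "clamp_out (2 * p) \<in> carrier_mat (2 * p) (2 * (2 * p))"
    by (simp_all add: first_row_indicator_def later_rows_indicator_def lits_proj_def
        clamp_gate_def unit_readout_def clamp_shift_def clamp_out_def)
  \<comment> \<open>Top clause scores: \<open>3 - 2 |C \<inter> A| = 3\<close> iff \<open>C\<close> is unsatisfied;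
    \<open>|{l \<in> C. \<not>l \<in> A}| = 3\<close> iff \<open>C\<close> is falsified; \<open>-3 |C \<inter> A| + |{l \<in> C. \<not>l \<in> A}| = 2\<close>
    iff \<open>C\<close> is unit, provided no clause is falsified.\<close>
  show ?thesis
    apply (rule exI[of _ "2 * p + 2"], rule exI[of _ "query_mat p (-2) 0 1 2"],
           rule exI[of _ "1\<^sub>m (2 * p + 2)"], rule exI[of _ "first_row_indicator p"])
    apply (rule exI[of _ "2 * p + 2"], rule exI[of _ "query_mat p 0 1 0 (5/2)"],
           rule exI[of _ "1\<^sub>m (2 * p + 2)"], rule exI[of _ "later_rows_indicator p"])
    apply (rule exI[of _ "2 * p + 2"], rule exI[of _ "query_mat p (-3) 1 0 (3/2)"],
           rule exI[of _ "1\<^sub>m (2 * p + 2)"], rule exI[of _ "lits_proj p"])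
    apply (rule exI[of _ "2 * (2 * p)"], rule exI[of _ "0\<^sub>m (2 * (2 * p)) (2 * p + (2 * p + 2))"],
           rule exI[of _ "vec (2 * (2 * p)) (\<lambda>_. 1)"], rule exI[of _ "clamp_gate (unit_readout p c)"],
           rule exI[of _ "clamp_shift (2 * p)"], rule exI[of _ "clamp_out (2 * p)"], rule exI[of _ "0\<^sub>v (2 * p)"])
    using carriers query_mat_carrier sat_instance.sat_head[OF inst]
      sat_instance.refute_head[OF inst] sat_instance.unit_propagation_layer[OF inst]
    by auto
qed

end
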